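(* Let $\mathbb{M}$ be the generic structure of the class $\mathbb{C}$, and let $\widehat{\mathbb{M}}=(\mathcal{G}(\mathbb{M}))^{\mathrm{geo}}$, an $\{S\}$-structure on the same universe as $\mathbb{M}$ which is isomorphic to the generic structure $\mathbb{M}^{\mathrm{geo}}$ of $\mathcal{C}^{\mathrm{geo}}$. Identifying $\widehat{\mathbb{M}}$ with $\mathbb{M}^{\mathrm{geo}}$, we have $\mathcal{G}(\mathbb{M})=\mathcal{G}(\mathbb{M}^{\mathrm{geo}})$, i.e. the geometries $\mathcal{G}(\mathbb{M})$ and $\mathcal{G}(\widehat{\mathbb{M}})$ on the common universe are equal (have the same dimension function).
   Context: Fix a natural number $n$ and a symmetric irreflexive $n$-ary relation symbol $S$; substructures are induced. For an $\{S\}$-structure $A$, $K\subseteq A$ with $|K|\ge n$ is a clique if all $n$-element subsets of $K$ (as tuples of distinct elements) lie in $S^A$; maximal cliques are those not properly contained in another clique; $\mathcal{M}(A)$ is the set of maximal cliques. For finite $X$, $|X|_*=\max\{0,|X|-(n-1)\}$; for finite $A$, $\delta_s(A)=|A|-\sum_{K\in\mathcal{M}(A)}|K|_*$; for finite $B\subseteq A$, $\delta_s(A/B)=\delta_s(A)-\delta_s(B)$, and for arbitrary $B\subseteq A$, $\delta_s(A/B)=\inf\{\delta_s(X/X\cap B):X\subseteq A\text{ finite}\}$; $B\le A$ means $\delta_s(X/B)\ge0$ for all $X$ with $B\subseteq X\subseteq A$. An embedding $f:A\to B$ is strong if $f[A]\le B$. $\mathcal{C}^{\mathrm{clq}}_0$: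 finite $\{S\}$-structures in which distinct maximal cliques meet in fewer than $n$ points; $\mathcal{C}^{\mathrm{clq}}$: those $A\in\mathcal{C}^{\mathrm{clq}}_0$ with $\{a\}\le A$ for all $a$; $\mathcal{C}^{\mathrm{sym}}$: those $A\in\mathcal{C}^{\mathrm{clq}}$ all of whose maximal cliques have exactly $n$ elements. For an $\{S\}$-structure $A$ with $\{a\}\le A$ for all $a$, the associated geometry $\mathcal{G}(A)$ is the geometry (finitary matroid with $\mathrm{cl}(\emptyset)=\emptyset$, singletons closed) on the universe of $A$ with dimension $d(X)=\inf\{\delta_s(Y):X\subseteq Y\subseteq A,\ Y\text{ finite}\}$ for finite $X$. A geometry is $m$-pure if $m$ is the maximal natural number such that every $m$-element subset is independent. For a geometry $\mathbf{A}$ on $A$, $\mathbf{A}^{\mathrm{geo}}$ is the $\{S\}$-structure on $A$ whose maximal cliques are exactly the sets $\mathrm{cl}_{\mathbf{A}}(C)$, $C\in[A]^{n-1}$, $\mathrm{cl}_{\mathbf{A}}(C)\neq C$. An $\{S\}$-structure $A$ is geometric if whenever $X\subseteq A$ is finite, $|X|\ge n$ and $\delta_s(X)<n$, there is a unique maximal clique of $A$ containing $X$; $\mathcal{C}^{\mathrm{geo}}$ is the class of finite geometric $\{S\}$-structures. $\mathbb{C}$ is the class of $A\in\mathcal{C}^{\mathrm{sym}}$ with $\mathcal{G}(A)$ $(n-1)$-pure. For a class of finite structures closed under isomorphism and substructures with the joint embedding and amalgamation properties with respect to strong embeddings (as $\mathbb{C}$ and $\mathcal{C}^{\mathrm{geo}}$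 are), the generic structure is the unique countable structure $\mathbb{M}$ whose finite substructures lie in the class and such that whenever $A\le\mathbb{M}$ is finite and $A\le D$ with $D$ in the class, there is an embedding $f:D\to\mathbb{M}$ fixing $A$ pointwise with $f[D]\le\mathbb{M}$. *)

theory Defs
  imports Main "HOL-Library.Extended_Real" "HOL-Library.Multiset" "HOL-Library.Countable_Set"
begin

text \<open>An n-ary relation symbol S is interpreted by a predicate on lists (tuples).
  A structure is a universe U together with such a predicate R.\<close>

definition is_struc :: "nat \<Rightarrow> 'a set \<Rightarrow> ('a list \<Rightarrow> bool) \<Rightarrow> bool" where
  "is_struc n U R \<longleftrightarrow>
     (\<forall>xs. R xs \<longrightarrow> length xs = n \<and> distinct xs \<and> set xs \<subseteq> U) \<and>
     (\<forall>xs ys. R xs \<longrightarrow> mset ys = mset xs \<longrightarrow> R ys)"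

definition restr :: "('a list \<Rightarrow> bool) \<Rightarrow> 'a set \<Rightarrow> 'a list \<Rightarrow> bool" where
  "restr R B = (\<lambda>xs. R xs \<and> set xs \<subseteq> B)"

definition clique :: "nat \<Rightarrow> 'a set \<Rightarrow> ('a list \<Rightarrow> bool) \<Rightarrow> 'a set \<Rightarrow> bool" where
  "clique n U R K \<longleftrightarrow> K \<subseteq> U \<and> (infinite K \<or> n \<le> card K) \<and>
     (\<forall>xs. length xs = n \<and> distinct xs \<and> set xs \<subseteq> K \<longrightarrow> R xs)"

definition maxcliques :: "nat \<Rightarrow> 'a set \<Rightarrow> ('a list \<Rightarrow> bool) \<Rightarrow> 'a set set" where
  "maxcliques n U R = {K. clique n U R K \<and> \<not> (\<exists>K'. clique n U R K' \<and> K \<subset> K')}"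

definition starcard :: "nat \<Rightarrow> 'a set \<Rightarrow> int" where
  "starcard n X = max 0 (int (card X) - (int n - 1))"

definition delta :: "nat \<Rightarrow> ('a list \<Rightarrow> bool) \<Rightarrow> 'a set \<Rightarrow> int" where
  "delta n R X = int (card X) - (\<Sum>K \<in> maxcliques n X (restr R X). starcard n K)"

definition delta_rel :: "nat \<Rightarrow> ('a list \<Rightarrow> bool) \<Rightarrow> 'a set \<Rightarrow> 'a set \<Rightarrow> ereal" where
  "delta_rel n R A B =
     (if finite A then ereal (real_of_int (delta n R A - delta n R B))
      else (INF X \<in> {X. X \<subseteq> A \<and> finite X}.
              ereal (real_of_int (delta n R X - delta n R (X \<inter> B)))))"

definition strong :: "nat \<Rightarrow> 'a set \<Rightarrow> ('a list \<Rightarrow> bool) \<Rightarrow> 'a set \<Rightarrow> bool" where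
  "strong n U R B \<longleftrightarrow> B \<subseteq> U \<and> (\<forall>X. B \<subseteq> X \<and> X \<subseteq> U \<longrightarrow> delta_rel n R X B \<ge> 0)"

definition dim :: "nat \<Rightarrow> 'a set \<Rightarrow> ('a list \<Rightarrow> bool) \<Rightarrow> 'a set \<Rightarrow> ereal" where
  "dim n U R X = (INF Y \<in> {Y. X \<subseteq> Y \<and> Y \<subseteq> U \<and> finite Y}. ereal (real_of_int (delta n R Y)))"

definition indep :: "nat \<Rightarrow> 'a set \<Rightarrow> ('a list \<Rightarrow> bool) \<Rightarrow> 'a set \<Rightarrow> bool" where
  "indep n U R X \<longleftrightarrow> dim n U R X = ereal (real (card X))"

definition gcl :: "nat \<Rightarrow> 'a set \<Rightarrow> ('a list \<Rightarrow> bool) \<Rightarrow> 'a set \<Rightarrow> 'a set" where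
  "gcl n U R X = {a \<in> U. dim n U R (insert a X) = dim n U R X}"

definition inC0 :: "nat \<Rightarrow> 'a set \<Rightarrow> ('a list \<Rightarrow> bool) \<Rightarrow> bool" where
  "inC0 n U R \<longleftrightarrow> finite U \<and> is_struc n U R \<and>
     (\<forall>K1 \<in> maxcliques n U R. \<forall>K2 \<in> maxcliques n U R. K1 \<noteq> K2 \<longrightarrow> card (K1 \<inter> K2) < n)"

definition inCclq :: "nat \<Rightarrow> 'a set \<Rightarrow> ('a list \<Rightarrow> bool) \<Rightarrow> bool" where
  "inCclq n U R \<longleftrightarrow> inC0 n U R \<and> (\<forall>a \<in> U. strong n U R {a})"

definition inCsym :: "nat \<Rightarrow> 'a set \<Rightarrow> ('a list \<Rightarrow> bool) \<Rightarrow> bool" where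
  "inCsym n U R \<longleftrightarrow> inCclq n U R \<and> (\<forall>K \<in> maxcliques n U R. card K = n)"

text \<open>The class \<open>\<bbbC>\<close>: (n-1)-purity read as "every (n-1)-element subset is independent".\<close>
definition inCC :: "nat \<Rightarrow> 'a set \<Rightarrow> ('a list \<Rightarrow> bool) \<Rightarrow> bool" where
  "inCC n U R \<longleftrightarrow> inCsym n U R \<and>
     (\<forall>X. X \<subseteq> U \<and> card X = n - 1 \<longrightarrow> indep n U R X)"

text \<open>(U,R) is the generic structure of \<open>\<bbbC>\<close> (structures realised on nat).\<close>
definition generic_CC :: "nat \<Rightarrow> nat set \<Rightarrow> (nat list \<Rightarrow> bool) \<Rightarrow> bool" where
  "generic_CC n U R \<longleftrightarrow> countable U \<and> is_struc n U R \<and>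
     (\<forall>B. finite B \<and> B \<subseteq> U \<longrightarrow> inCC n B (restr R B)) \<and>
     (\<forall>A UD RD. finite A \<and> strong n U R A \<and> A \<subseteq> UD \<and> inCC n UD RD \<and>
        restr RD A = restr R A \<and> strong n UD RD A \<longrightarrow>
        (\<exists>f. inj_on f UD \<and> f ` UD \<subseteq> U \<and> (\<forall>a \<in> A. f a = a) \<and>
             (\<forall>xs. set xs \<subseteq> UD \<longrightarrow> (RD xs \<longleftrightarrow> R (map f xs))) \<and>
             strong n U R (f ` UD)))"

end

theory Submission
  imports Defs
begin

text \<open>Every finite substructure of the generic structure \<open>(U, R)\<close> lies in \<open>\<bbbC>\<close>, so on it
  \<open>delta\<close> is the cardinality minus the number of \<open>n\<close>-element edges; hence \<open>delta\<close> is
  submodular, and every \<open>(n-1)\<close>-set has dimension \<open>n - 1\<close>. The closure \<open>gcl C\<close> of an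
  \<open>(n-1)\<close>-set \<open>C\<close> (a line) consists of the points \<open>x\<close> such that some finite
  \<open>W \<supseteq> C \<union> {x}\<close> has \<open>delta W \<le> n - 1\<close>, and a line is spanned by any \<open>n - 1\<close> of its points.
  On a finite \<open>Y\<close>, the maximal cliques \<open>T\<close> of \<open>Rhat\<close> are the traces of lines, every edge of
  \<open>Y\<close> lies in one of them, and \<open>T\<close> contains at most \<open>|T| - (n - 1)\<close> edges; so
  \<open>delta n Rhat Y \<le> delta n R Y\<close>. Conversely, extending each trace \<open>T\<close> inside its line to a
  finite \<open>W\<^sub>T\<close> with \<open>delta W\<^sub>T \<le> n - 1\<close> gives \<open>Z = Y \<union> \<Union>\<^sub>T W\<^sub>T\<close> with
  \<open>delta n R Z \<le> delta n Rhat Y\<close>, because distinct lines share no edge. Both dimension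
  functions are infima of \<open>delta\<close> over finite supersets, so they agree, and the same two
  inequalities transfer the strongness of singletons from \<open>R\<close> to \<open>Rhat\<close>. For \<open>n = 0\<close> both
  relations are empty and \<open>delta\<close> is the cardinality.\<close>

section \<open>Cliques, predimension and dimension\<close>

lemma clique_subset_maxclique:
  assumes "clique n U R K"
  obtains M where "M \<in> maxcliques n U R" "K \<subseteq> M"
proof -
  let ?A = "{K'. clique n U R K' \<and> K \<subseteq> K'}"
  have "\<exists>M\<in>?A. \<forall>X\<in>?A. M \<subseteq> X \<longrightarrow> X = M"
  proof (rule subset_Zorn_nonempty)
    show "?A \<noteq> {}" using assms by blast
  next
    fix Ch assume Ch: "Ch \<noteq> {}" "subset.chain ?A Ch"
    then obtain K0 where K0: "K0 \<in> Ch" by blast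
    have mem: "clique n U R K' \<and> K \<subseteq> K'" if "K' \<in> Ch" for K'
      using Ch that by (auto simp: subset.chain_def)
    have size: "infinite (\<Union>Ch) \<or> n \<le> card (\<Union>Ch)"
    proof (cases "finite (\<Union>Ch)")
      case True
      have sub: "K0 \<subseteq> \<Union>Ch" using K0 by blast
      then have "finite K0" using True by (rule finite_subset)
      then have "n \<le> card K0" using mem[OF K0] by (simp add: clique_def)
      also have "\<dots> \<le> card (\<Union>Ch)" using True sub by (rule card_mono)
      finally show ?thesis by simp
    qed simp
    have "R xs" if xs: "length xs = n" "distinct xs" "set xs \<subseteq> \<Union>Ch" for xs
    proof -
      obtain B where "B \<in> Ch" "set xs \<subseteq> B"
        using finite_subset_Union_chain[OF _ xs(3) Ch] by blast
      then show ?thesis using mem xs by (auto simp: clique_def)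
    qed
    moreover have "\<Union>Ch \<subseteq> U" "K \<subseteq> \<Union>Ch" using mem K0 by (auto simp: clique_def)
    ultimately show "\<Union>Ch \<in> ?A" using size by (simp add: clique_def)
  qed
  then obtain M where M: "M \<in> ?A" "\<forall>X\<in>?A. M \<subseteq> X \<longrightarrow> X = M" by blast
  then have "M \<in> maxcliques n U R" unfolding maxcliques_def by auto
  with M show thesis using that by blast
qed

lemma clique_restr:
  assumes "clique n U R K" "n \<le> card (K \<inter> Y)"
  shows "clique n Y (restr R Y) (K \<inter> Y)"
  using assms by (auto simp: clique_def restr_def)

lemma clique_of_restr:
  assumes "clique n Y (restr R Y) K" "Y \<subseteq> U"
  shows "clique n U R K"
  using assms by (auto simp: clique_def restr_def)

lemma finite_maxcliques: "finite U \<Longrightarrow> finite (maxcliques n U R)"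
  by (rule finite_subset[of _ "Pow U"]) (auto simp: maxcliques_def clique_def)

lemma maxcliques_finite_card:
  assumes "finite U" "T \<in> maxcliques n U R"
  shows "T \<subseteq> U" "finite T" "n \<le> card T"
proof -
  show "T \<subseteq> U" using assms(2) by (simp add: maxcliques_def clique_def)
  then show "finite T" using assms(1) by (rule finite_subset)
  then show "n \<le> card T" using assms(2) by (simp add: maxcliques_def clique_def)
qed

lemma restr_restr: "Y \<subseteq> W \<Longrightarrow> restr (restr R W) Y = restr R Y"
  by (auto simp: restr_def fun_eq_iff)

lemma delta_restr: "Y \<subseteq> W \<Longrightarrow> delta n (restr R W) Y = delta n R Y"
  by (simp add: delta_def restr_restr)

lemma delta_eq_sum_maxcliques:
  assumes "1 \<le> n" "finite Y"
  shows "delta n R Y =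
    int (card Y) - (\<Sum>T\<in>maxcliques n Y (restr R Y). int (card T) - int (n - 1))"
proof -
  have "starcard n T = int (card T) - int (n - 1)" if "T \<in> maxcliques n Y (restr R Y)" for T
    using assms maxcliques_finite_card(3)[OF assms(2) that] by (simp add: starcard_def)
  then show ?thesis by (simp add: delta_def)
qed

lemma dim_le_delta:
  "X \<subseteq> Y \<Longrightarrow> Y \<subseteq> U \<Longrightarrow> finite Y \<Longrightarrow> dim n U R X \<le> ereal (real_of_int (delta n R Y))"
  unfolding dim_def by (rule INF_lower) auto

lemma dim_geI:
  "(\<And>Y. X \<subseteq> Y \<Longrightarrow> Y \<subseteq> U \<Longrightarrow> finite Y \<Longrightarrow> m \<le> delta n R Y) \<Longrightarrow>
   ereal (real_of_int m) \<le> dim n U R X"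
  unfolding dim_def by (rule INF_greatest) auto

text \<open>The values of \<open>delta\<close> are integers, so the infimum defining \<open>dim\<close> is attained.\<close>

lemma dim_le_iff:
  "dim n U R X \<le> ereal (real_of_int m) \<longleftrightarrow>
   (\<exists>Y. X \<subseteq> Y \<and> Y \<subseteq> U \<and> finite Y \<and> delta n R Y \<le> m)"
proof
  assume le: "dim n U R X \<le> ereal (real_of_int m)"
  show "\<exists>Y. X \<subseteq> Y \<and> Y \<subseteq> U \<and> finite Y \<and> delta n R Y \<le> m"
  proof (rule ccontr)
    assume none: "\<not> ?thesis"
    have "m + 1 \<le> delta n R Y" if "X \<subseteq> Y" "Y \<subseteq> U" "finite Y" for Y
    proof -
      have "\<not> delta n R Y \<le> m" using none that by blast
      then show ?thesis by simp
    qed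
    then have "ereal (real_of_int (m + 1)) \<le> dim n U R X" by (rule dim_geI)
    from this le have "ereal (real_of_int (m + 1)) \<le> ereal (real_of_int m)"
      by (rule order_trans)
    then show False by simp
  qed
next
  assume "\<exists>Y. X \<subseteq> Y \<and> Y \<subseteq> U \<and> finite Y \<and> delta n R Y \<le> m"
  then obtain Y where Y: "X \<subseteq> Y" "Y \<subseteq> U" "finite Y" "delta n R Y \<le> m" by blast
  then have "dim n U R X \<le> ereal (real_of_int (delta n R Y))" by (intro dim_le_delta)
  also have "\<dots> \<le> ereal (real_of_int m)" using Y(4) by simp
  finally show "dim n U R X \<le> ereal (real_of_int m)" .
qed

lemma dim_le_dimI:
  assumes "\<And>Y. X \<subseteq> Y \<Longrightarrow> Y \<subseteq> U \<Longrightarrow> finite Y \<Longrightarrow>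
             \<exists>Z. Y \<subseteq> Z \<and> Z \<subseteq> U \<and> finite Z \<and> delta n R Z \<le> delta n R' Y"
  shows "dim n U R X \<le> dim n U R' X"
  unfolding dim_def[of n U R' X]
proof (rule INF_greatest)
  fix Y assume "Y \<in> {Y. X \<subseteq> Y \<and> Y \<subseteq> U \<and> finite Y}"
  then have Y: "X \<subseteq> Y" "Y \<subseteq> U" "finite Y" by simp_all
  obtain Z where Z: "Y \<subseteq> Z" "Z \<subseteq> U" "finite Z" "delta n R Z \<le> delta n R' Y"
    using assms[OF Y] by blast
  from Y(1) Z(1-3) have "dim n U R X \<le> ereal (real_of_int (delta n R Z))"
    by (intro dim_le_delta) auto
  also have "\<dots> \<le> ereal (real_of_int (delta n R' Y))" using Z(4) by simp
  finally show "dim n U R X \<le> ereal (real_of_int (delta n R' Y))" .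
qed

lemma strong_delta_le:
  assumes "strong n U R B" "finite X" "B \<subseteq> X" "X \<subseteq> U"
  shows "delta n R B \<le> delta n R X"
proof -
  have "0 \<le> delta_rel n R X B" using assms(1,3,4) unfolding strong_def by blast
  with assms(2) show ?thesis by (simp add: delta_rel_def)
qed

lemma strongI_delta:
  assumes "B \<subseteq> U"
    and mono: "\<And>X. finite X \<Longrightarrow> X \<subseteq> U \<Longrightarrow> delta n R (X \<inter> B) \<le> delta n R X"
  shows "strong n U R B"
  unfolding strong_def
proof (intro conjI allI impI)
  fix X assume X: "B \<subseteq> X \<and> X \<subseteq> U"
  show "0 \<le> delta_rel n R X B"
  proof (cases "finite X")
    case True
    with X mono[of X] show ?thesis by (simp add: delta_rel_def Int_absorb1)
  next
    case False
    have "0 \<le> (INF Y \<in> {Y. Y \<subseteq> X \<and> finite Y}.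
                 ereal (real_of_int (delta n R Y - delta n R (Y \<inter> B))))"
      using X mono by (intro INF_greatest) auto
    with False show ?thesis by (simp add: delta_rel_def)
  qed
qed (fact assms)

lemma card_Un_UN_le:
  assumes "finite I" "\<And>i. i \<in> I \<Longrightarrow> finite (W i)"
  shows "int (card (Y \<union> (\<Union>i\<in>I. W i))) \<le>
         int (card Y) + (\<Sum>i\<in>I. int (card (W i)) - int (card (W i \<inter> Y)))"
proof -
  have "Y \<union> (\<Union>i\<in>I. W i) = Y \<union> (\<Union>i\<in>I. W i - Y)" by blast
  then have "card (Y \<union> (\<Union>i\<in>I. W i)) \<le> card Y + card (\<Union>i\<in>I. W i - Y)" by (metis card_Un_le)
  also have "card (\<Union>i\<in>I. W i - Y) \<le> (\<Sum>i\<in>I. card (W i - Y))" by (rule card_UN_le[OF assms(1)])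
  finally have "int (card (Y \<union> (\<Union>i\<in>I. W i))) \<le> int (card Y) + (\<Sum>i\<in>I. int (card (W i - Y)))"
    by (simp only: of_nat_sum[symmetric] of_nat_add[symmetric] of_nat_le_iff)
  moreover have "int (card (W i - Y)) = int (card (W i)) - int (card (W i \<inter> Y))" if "i \<in> I" for i
    using card_Int_Diff[of "W i" Y] assms(2)[OF that] by simp
  ultimately show ?thesis by simp
qed

definition edges :: "nat \<Rightarrow> ('a list \<Rightarrow> bool) \<Rightarrow> 'a set \<Rightarrow> 'a set set" where
  "edges n R X =
     {K. K \<subseteq> X \<and> card K = n \<and> (\<forall>xs. length xs = n \<and> distinct xs \<and> set xs \<subseteq> K \<longrightarrow> R xs)}"

lemma finite_edges: "finite X \<Longrightarrow> finite (edges n R X)"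
  unfolding edges_def by (rule finite_subset[of _ "Pow X"]) auto

lemma delta_eq_card_edges:
  assumes "finite X" "inCsym n X (restr R X)"
  shows "delta n R X = int (card X) - int (card (edges n R X))"
proof -
  have "maxcliques n X (restr R X) = edges n R X"
  proof (intro equalityI subsetI)
    fix K assume "K \<in> maxcliques n X (restr R X)"
    with assms(2) show "K \<in> edges n R X"
      by (auto simp: inCsym_def maxcliques_def clique_def edges_def restr_def)
  next
    fix K assume K: "K \<in> edges n R X"
    then have cl: "clique n X (restr R X) K"
      by (auto simp: clique_def edges_def restr_def)
    have "\<not> K \<subset> K'" if K': "clique n X (restr R X) K'" for K'
    proof
      assume "K \<subset> K'"
      obtain M where M: "M \<in> maxcliques n X (restr R X)" "K' \<subseteq> M"
        by (rule clique_subset_maxclique[OF K'])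
      then have "finite M" "card M = n"
        using assms maxcliques_finite_card(2) by (auto simp: inCsym_def)
      with \<open>K \<subset> K'\<close> M(2) have "card K < card M"
        by (meson psubset_card_mono psubset_subset_trans)
      with K \<open>card M = n\<close> show False by (simp add: edges_def)
    qed
    with cl show "K \<in> maxcliques n X (restr R X)" unfolding maxcliques_def by blast
  qed
  moreover have "starcard n K = 1" if "K \<in> edges n R X" for K
    using that by (auto simp: edges_def starcard_def)
  ultimately have "(\<Sum>K\<in>maxcliques n X (restr R X). starcard n K) = int (card (edges n R X))"
    by simp
  then show ?thesis by (simp add: delta_def)
qed

section \<open>Lines of a structure whose finite parts lie in \<open>\<bbbC>\<close>\<close>

locale locally_CC =
  fixes n :: nat and U :: "'a set" and R :: "'a list \<Rightarrow> bool"
  assumes finite_CC: "\<And>B. finite B \<Longrightarrow> B \<subseteq> U \<Longrightarrow> inCC n B (restr R B)"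
    and arity_pos: "1 \<le> n"
begin

lemma delta_eq_edges:
  assumes "finite X" "X \<subseteq> U"
  shows "delta n R X = int (card X) - int (card (edges n R X))"
  using finite_CC[OF assms] assms(1) by (intro delta_eq_card_edges) (simp_all add: inCC_def)

lemma delta_le_card: "finite X \<Longrightarrow> X \<subseteq> U \<Longrightarrow> delta n R X \<le> int (card X)"
  using delta_eq_edges by simp

lemma pure_delta_ge:
  assumes "C \<subseteq> W" "W \<subseteq> U" "finite W" "card C = n - 1"
  shows "int (n - 1) \<le> delta n R W"
proof -
  have "indep n W (restr R W) C" using finite_CC[OF assms(3,2)] assms(1,4) by (simp add: inCC_def)
  then have "dim n W (restr R W) C = ereal (real (n - 1))" using assms(4) by (simp add: indep_def)
  moreover have "dim n W (restr R W) C \<le> ereal (real_of_int (delta n (restr R W) W))"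
    using assms by (intro dim_le_delta) auto
  ultimately show ?thesis by (simp add: delta_restr)
qed

lemma delta_singleton_le:
  assumes "finite Z" "Z \<subseteq> U" "a \<in> Z"
  shows "delta n R {a} \<le> delta n R Z"
proof -
  have "strong n Z (restr R Z) {a}"
    using finite_CC[OF assms(1,2)] assms(3) by (simp add: inCC_def inCsym_def inCclq_def)
  then have "delta n (restr R Z) {a} \<le> delta n (restr R Z) Z"
    by (rule strong_delta_le) (use assms in auto)
  with assms(3) show ?thesis by (simp add: delta_restr)
qed

lemma delta_empty: "delta n R {} = 0"
proof -
  have "edges n R {} = {}" using arity_pos by (auto simp: edges_def)
  then show ?thesis using delta_eq_edges[of "{}"] by simp
qed

lemma delta_nonneg:
  assumes "finite Z" "Z \<subseteq> U"
  shows "0 \<le> delta n R Z"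
proof (cases "Z = {}")
  case True
  then show ?thesis by (simp add: delta_empty)
next
  case False
  then obtain a where a: "a \<in> Z" by blast
  have "edges n R {a} \<subseteq> {{a}}" using arity_pos by (auto simp: edges_def subset_singleton_iff)
  then have "card (edges n R {a}) \<le> 1" using card_mono[of "{{a}}"] by fastforce
  with a assms have "0 \<le> delta n R {a}" using delta_eq_edges[of "{a}"] by auto
  also have "\<dots> \<le> delta n R Z" using delta_singleton_le[OF assms a] .
  finally show ?thesis .
qed

lemma delta_submodular:
  assumes "finite A" "finite B" "A \<subseteq> U" "B \<subseteq> U"
  shows "delta n R (A \<union> B) + delta n R (A \<inter> B) \<le> delta n R A + delta n R B"
proof -
  have fin: "finite (edges n R A)" "finite (edges n R B)" "finite (edges n R (A \<union> B))"
    using assms by (simp_all add: finite_edges)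
  have "card (edges n R A) + card (edges n R B) =
        card (edges n R A \<union> edges n R B) + card (edges n R A \<inter> edges n R B)"
    using card_Un_Int[OF fin(1,2)] .
  also have "\<dots> \<le> card (edges n R (A \<union> B)) + card (edges n R (A \<inter> B))"
  proof -
    have "edges n R A \<union> edges n R B \<subseteq> edges n R (A \<union> B)" by (auto simp: edges_def)
    moreover have "edges n R A \<inter> edges n R B = edges n R (A \<inter> B)" by (auto simp: edges_def)
    ultimately show ?thesis using card_mono[OF fin(3)] by simp
  qed
  finally have "card (edges n R A) + card (edges n R B) \<le>
                card (edges n R (A \<union> B)) + card (edges n R (A \<inter> B))" .
  moreover have "card A + card B = card (A \<union> B) + card (A \<inter> B)"
    using card_Un_Int assms(1,2) by blast
  moreover have "finite (A \<inter> B)" "A \<inter> B \<subseteq> U" "finite (A \<union> B)" "A \<union> B \<subseteq> U"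
    using assms by auto
  ultimately show ?thesis using assms by (simp add: delta_eq_edges)
qed

lemma card_edges_le:
  assumes "finite T" "T \<subseteq> U" "n \<le> card T"
  shows "int (card (edges n R T)) \<le> int (card T) - int (n - 1)"
proof -
  have "n - 1 \<le> card T" using assms(3) by simp
  then obtain C where "C \<subseteq> T" "card C = n - 1" "finite C" by (rule obtain_subset_with_card_n)
  then have "int (n - 1) \<le> delta n R T" using assms by (intro pure_delta_ge)
  with assms show ?thesis using delta_eq_edges by simp
qed

lemma dim_card_n_minus_1:
  assumes "C \<subseteq> U" "finite C" "card C = n - 1"
  shows "dim n U R C = ereal (real (n - 1))"
proof (rule antisym)
  have "dim n U R C \<le> ereal (real_of_int (delta n R C))" using assms by (intro dim_le_delta) auto
  also have "\<dots> \<le> ereal (real (n - 1))" using delta_le_card[of C] assms by simp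
  finally show "dim n U R C \<le> ereal (real (n - 1))" .
  show "ereal (real (n - 1)) \<le> dim n U R C"
    using dim_geI[of C U "int (n - 1)" n R] pure_delta_ge assms(3) by simp
qed

lemma mem_gcl_iff:
  assumes "C \<subseteq> U" "finite C" "card C = n - 1"
  shows "x \<in> gcl n U R C \<longleftrightarrow>
    x \<in> U \<and> (\<exists>W. insert x C \<subseteq> W \<and> W \<subseteq> U \<and> finite W \<and> delta n R W \<le> int (n - 1))"
proof -
  have "ereal (real (n - 1)) \<le> dim n U R (insert x C)"
    using dim_geI[of "insert x C" U "int (n - 1)" n R] pure_delta_ge assms(3) by auto
  then have "x \<in> gcl n U R C \<longleftrightarrow> x \<in> U \<and> dim n U R (insert x C) \<le> ereal (real_of_int (int (n - 1)))"
    using dim_card_n_minus_1[OF assms] by (auto simp: gcl_def)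
  then show ?thesis by (simp only: dim_le_iff)
qed

lemma subset_gcl:
  assumes "C \<subseteq> W" "W \<subseteq> U" "finite W" "delta n R W \<le> int (n - 1)" "card C = n - 1"
  shows "W \<subseteq> gcl n U R C"
proof
  fix x assume "x \<in> W"
  have "C \<subseteq> U" using assms(1,2) by (rule order_trans)
  moreover have "finite C" using assms(1,3) by (rule finite_subset)
  ultimately show "x \<in> gcl n U R C"
    using assms \<open>x \<in> W\<close> by (subst mem_gcl_iff) auto
qed

lemma self_subset_gcl:
  assumes "C \<subseteq> U" "finite C" "card C = n - 1"
  shows "C \<subseteq> gcl n U R C"
  using assms delta_le_card[of C] by (intro subset_gcl) auto

text \<open>Witnesses for membership in a line are closed under union: by purity their
  intersection, which contains \<open>C\<close>, has \<open>delta \<ge> n - 1\<close>, so submodularity keeps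
  \<open>delta \<le> n - 1\<close> for the union.\<close>

lemma gcl_finite_subset_witness:
  assumes C: "C \<subseteq> U" "finite C" "card C = n - 1" and F: "finite F" "F \<subseteq> gcl n U R C"
  shows "\<exists>W. C \<union> F \<subseteq> W \<and> W \<subseteq> U \<and> finite W \<and> delta n R W \<le> int (n - 1)"
  using F
proof (induction F rule: finite_induct)
  case empty
  show ?case using C delta_le_card[OF C(2,1)] by (intro exI[of _ C]) auto
next
  case (insert x F)
  then obtain W1 where W1: "C \<union> F \<subseteq> W1" "W1 \<subseteq> U" "finite W1" "delta n R W1 \<le> int (n - 1)"
    by auto
  obtain W2 where W2: "insert x C \<subseteq> W2" "W2 \<subseteq> U" "finite W2" "delta n R W2 \<le> int (n - 1)"
    using insert.prems mem_gcl_iff[OF C] by auto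
  have "int (n - 1) \<le> delta n R (W1 \<inter> W2)"
    using W1 W2 C(3) by (intro pure_delta_ge) auto
  then have "delta n R (W1 \<union> W2) \<le> int (n - 1)"
    using delta_submodular[OF W1(3) W2(3) W1(2) W2(2)] W1(4) W2(4) by linarith
  with W1 W2 show ?case by (intro exI[of _ "W1 \<union> W2"]) auto
qed

lemma gcl_subset_gcl:
  assumes C: "C \<subseteq> U" "finite C" "card C = n - 1"
    and D: "finite D" "card D = n - 1" "D \<subseteq> gcl n U R C"
  shows "gcl n U R C \<subseteq> gcl n U R D"
proof
  fix x assume "x \<in> gcl n U R C"
  with D obtain W where W: "C \<union> insert x D \<subseteq> W" "W \<subseteq> U" "finite W" "delta n R W \<le> int (n - 1)"
    using gcl_finite_subset_witness[OF C, of "insert x D"] by auto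
  then have "W \<subseteq> gcl n U R D" using D(2) by (intro subset_gcl) auto
  with W(1) show "x \<in> gcl n U R D" by blast
qed

lemma gcl_eq_if_subset:
  assumes C: "C \<subseteq> U" "finite C" "card C = n - 1"
    and D: "finite D" "card D = n - 1" "D \<subseteq> gcl n U R C"
  shows "gcl n U R D = gcl n U R C"
proof
  show CD: "gcl n U R C \<subseteq> gcl n U R D" by (rule gcl_subset_gcl[OF C D])
  have "D \<subseteq> U" using D(3) by (auto simp: gcl_def)
  moreover have "C \<subseteq> gcl n U R D" using self_subset_gcl[OF C] CD by blast
  ultimately show "gcl n U R D \<subseteq> gcl n U R C" by (rule gcl_subset_gcl[OF _ D(1,2) C(2,3)])
qed

lemma gcl_eq_if_common_subset:
  assumes C1: "C1 \<subseteq> U" "finite C1" "card C1 = n - 1"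
    and C2: "C2 \<subseteq> U" "finite C2" "card C2 = n - 1"
    and K: "K \<subseteq> gcl n U R C1" "K \<subseteq> gcl n U R C2" "n - 1 \<le> card K"
  shows "gcl n U R C1 = gcl n U R C2"
proof -
  obtain D where D: "D \<subseteq> K" "card D = n - 1" "finite D"
    using K(3) by (rule obtain_subset_with_card_n)
  have "gcl n U R D = gcl n U R C1"
    by (rule gcl_eq_if_subset[OF C1 D(3,2)]) (use D(1) K(1) in blast)
  moreover have "gcl n U R D = gcl n U R C2"
    by (rule gcl_eq_if_subset[OF C2 D(3,2)]) (use D(1) K(2) in blast)
  ultimately show ?thesis by simp
qed

lemma edge_subset_gcl:
  assumes "K \<in> edges n R Y" "Y \<subseteq> U" "C \<subseteq> K" "card C = n - 1"
  shows "K \<subseteq> gcl n U R C" "gcl n U R C \<noteq> C"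
proof -
  have K: "K \<subseteq> U" "card K = n" using assms(1,2) by (auto simp: edges_def)
  then have "finite K" using arity_pos card_eq_0_iff by fastforce
  have "K \<in> edges n R K" using assms(1) by (auto simp: edges_def)
  then have "0 < card (edges n R K)" using finite_edges[OF \<open>finite K\<close>] card_gt_0_iff by blast
  then have "delta n R K \<le> int (n - 1)" using delta_eq_edges[OF \<open>finite K\<close> K(1)] K(2) by simp
  then show sub: "K \<subseteq> gcl n U R C" using assms(3,4) K \<open>finite K\<close> by (intro subset_gcl) auto
  show "gcl n U R C \<noteq> C"
  proof
    assume "gcl n U R C = C"
    then have "card K \<le> card C"
      using sub assms(3) \<open>finite K\<close> by (intro card_mono) (auto intro: finite_subset)
    with K(2) assms(4) arity_pos show False by simp
  qed
qed

lemma delta_Un_family_le: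
  assumes I: "finite I" and Y: "finite Y" "Y \<subseteq> U"
    and W: "\<And>i. i \<in> I \<Longrightarrow> finite (W i) \<and> W i \<subseteq> U \<and> delta n R (W i) \<le> int (n - 1)"
    and disj: "\<And>i j. i \<in> I \<Longrightarrow> j \<in> I \<Longrightarrow> i \<noteq> j \<Longrightarrow> edges n R (W i) \<inter> edges n R (W j) = {}"
  shows "delta n R (Y \<union> (\<Union>i\<in>I. W i)) \<le>
         int (card Y) - (\<Sum>i\<in>I. int (card (W i \<inter> Y)) - int (n - 1))"
proof -
  define Z where "Z = Y \<union> (\<Union>i\<in>I. W i)"
  have Z: "finite Z" "Z \<subseteq> U" using I Y W by (auto simp: Z_def)
  have card_Z: "int (card Z) \<le> int (card Y) + (\<Sum>i\<in>I. int (card (W i)) - int (card (W i \<inter> Y)))"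
    unfolding Z_def using W by (intro card_Un_UN_le[OF I]) blast
  have "(\<Sum>i\<in>I. card (edges n R (W i))) = card (\<Union>i\<in>I. edges n R (W i))"
    using I W disj by (intro card_UN_disjoint[symmetric]) (auto simp: finite_edges)
  also have "\<dots> \<le> card (edges n R Z)"
    using Z by (intro card_mono finite_edges) (auto simp: Z_def edges_def)
  finally have "(\<Sum>i\<in>I. int (card (edges n R (W i)))) \<le> int (card (edges n R Z))"
    by (simp only: of_nat_sum[symmetric] of_nat_le_iff)
  moreover have "(\<Sum>i\<in>I. int (card (W i)) - int (n - 1)) \<le> (\<Sum>i\<in>I. int (card (edges n R (W i))))"
    using W delta_eq_edges by (intro sum_mono) force
  ultimately have "delta n R Z \<le>
      int (card Y) + (\<Sum>i\<in>I. int (card (W i)) - int (card (W i \<inter> Y)))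
        - (\<Sum>i\<in>I. int (card (W i)) - int (n - 1))"
    using card_Z delta_eq_edges[OF Z] by linarith
  also have "\<dots> = int (card Y) - (\<Sum>i\<in>I. int (card (W i \<inter> Y)) - int (n - 1))"
    by (simp add: sum_subtractf)
  finally show ?thesis unfolding Z_def .
qed

end

section \<open>The structure whose maximal cliques are the lines\<close>

locale geo_structure = locally_CC +
  fixes Rhat :: "'a list \<Rightarrow> bool"
  assumes maxcliques_hat: "maxcliques n U Rhat =
      {gcl n U R C | C. C \<subseteq> U \<and> finite C \<and> card C = n - 1 \<and> gcl n U R C \<noteq> C}"
begin

lemma clique_hat_gcl:
  assumes "C \<subseteq> U" "finite C" "card C = n - 1" "gcl n U R C \<noteq> C"
  shows "clique n U Rhat (gcl n U R C)"
proof -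
  have "gcl n U R C \<in> maxcliques n U Rhat" using maxcliques_hat assms by blast
  then show ?thesis by (simp add: maxcliques_def)
qed

lemma clique_hat_subset_gcl:
  assumes K: "clique n U Rhat K" and C: "C \<subseteq> K" "finite C" "card C = n - 1"
  shows "K \<subseteq> gcl n U R C" "gcl n U R C \<noteq> C"
proof -
  obtain M where "M \<in> maxcliques n U Rhat" "K \<subseteq> M" by (rule clique_subset_maxclique[OF K])
  then obtain C' where C': "C' \<subseteq> U" "finite C'" "card C' = n - 1" and KC': "K \<subseteq> gcl n U R C'"
    using maxcliques_hat by auto
  then have "gcl n U R C = gcl n U R C'" using C by (intro gcl_eq_if_subset) auto
  with KC' show sub: "K \<subseteq> gcl n U R C" by simp
  have "\<not> K \<subseteq> C"
  proof
    assume "K \<subseteq> C"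
    then have "finite K" "card K \<le> card C" using C(2) by (auto intro: finite_subset card_mono)
    moreover from K \<open>finite K\<close> have "n \<le> card K" by (simp add: clique_def)
    ultimately show False using C(3) arity_pos by linarith
  qed
  with sub show "gcl n U R C \<noteq> C" by blast
qed

lemma maxclique_hat_eq_gcl_Int:
  assumes Y: "finite Y" "Y \<subseteq> U" and T: "T \<in> maxcliques n Y (restr Rhat Y)"
    and C: "C \<subseteq> T" "card C = n - 1"
  shows "T = gcl n U R C \<inter> Y"
proof -
  note T' = maxcliques_finite_card[OF Y(1) T]
  have "finite C" using C(1) T'(2) by (rule finite_subset)
  have "clique n Y (restr Rhat Y) T" using T by (simp add: maxcliques_def)
  then have "clique n U Rhat T" using Y(2) by (rule clique_of_restr)
  note TC = clique_hat_subset_gcl[OF this C(1) \<open>finite C\<close> C(2)]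
  have "C \<subseteq> U" using C(1) T'(1) Y(2) by blast
  have "clique n Y (restr Rhat Y) (gcl n U R C \<inter> Y)"
  proof (rule clique_restr[OF clique_hat_gcl[OF \<open>C \<subseteq> U\<close> \<open>finite C\<close> C(2) TC(2)]])
    have "card T \<le> card (gcl n U R C \<inter> Y)" using TC(1) T'(1) Y(1) by (intro card_mono) auto
    with T'(3) show "n \<le> card (gcl n U R C \<inter> Y)" by simp
  qed
  moreover have "T \<subseteq> gcl n U R C \<inter> Y" using TC(1) T'(1) by blast
  moreover have "\<not> (clique n Y (restr Rhat Y) K' \<and> T \<subset> K')" for K'
    using T by (simp add: maxcliques_def)
  ultimately show ?thesis by blast
qed

lemma edge_subset_maxclique_hat:
  assumes Y: "finite Y" "Y \<subseteq> U" and K: "K \<in> edges n R Y"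
  obtains T where "T \<in> maxcliques n Y (restr Rhat Y)" "K \<subseteq> T"
proof -
  have K': "K \<subseteq> Y" "card K = n" using K by (auto simp: edges_def)
  then have "n - 1 \<le> card K" by simp
  then obtain C where C: "C \<subseteq> K" "card C = n - 1" "finite C" by (rule obtain_subset_with_card_n)
  have "C \<subseteq> U" using C(1) K'(1) Y(2) by blast
  note KC = edge_subset_gcl[OF K Y(2) C(1,2)]
  have "clique n Y (restr Rhat Y) (gcl n U R C \<inter> Y)"
  proof (rule clique_restr[OF clique_hat_gcl[OF \<open>C \<subseteq> U\<close> C(3,2) KC(2)]])
    have "card K \<le> card (gcl n U R C \<inter> Y)" using KC(1) K'(1) Y(1) by (intro card_mono) auto
    with K'(2) show "n \<le> card (gcl n U R C \<inter> Y)" by simp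
  qed
  then obtain T where "T \<in> maxcliques n Y (restr Rhat Y)" "gcl n U R C \<inter> Y \<subseteq> T"
    by (rule clique_subset_maxclique)
  with KC(1) K'(1) show thesis using that by blast
qed

lemma delta_hat_le:
  assumes Y: "finite Y" "Y \<subseteq> U"
  shows "delta n Rhat Y \<le> delta n R Y"
proof -
  let ?T = "maxcliques n Y (restr Rhat Y)"
  have fin: "finite ?T" using Y(1) by (rule finite_maxcliques)
  have "edges n R Y \<subseteq> (\<Union>T\<in>?T. edges n R T)"
  proof
    fix K assume K: "K \<in> edges n R Y"
    then obtain T where "T \<in> ?T" "K \<subseteq> T" by (rule edge_subset_maxclique_hat[OF Y])
    with K show "K \<in> (\<Union>T\<in>?T. edges n R T)" by (auto simp: edges_def)
  qed
  then have "card (edges n R Y) \<le> card (\<Union>T\<in>?T. edges n R T)"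
    using fin maxcliques_finite_card(2)[OF Y(1)] by (intro card_mono) (auto simp: finite_edges)
  also have "\<dots> \<le> (\<Sum>T\<in>?T. card (edges n R T))" by (rule card_UN_le[OF fin])
  finally have "int (card (edges n R Y)) \<le> (\<Sum>T\<in>?T. int (card (edges n R T)))"
    by (simp only: of_nat_sum[symmetric] of_nat_le_iff)
  also have "\<dots> \<le> (\<Sum>T\<in>?T. int (card T) - int (n - 1))"
  proof (rule sum_mono)
    fix T assume "T \<in> ?T"
    note T' = maxcliques_finite_card[OF Y(1) this]
    show "int (card (edges n R T)) \<le> int (card T) - int (n - 1)"
      using T'(1) Y(2) by (intro card_edges_le[OF T'(2) _ T'(3)]) blast
  qed
  finally show ?thesis
    using delta_eq_sum_maxcliques[OF arity_pos Y(1), where R = Rhat] delta_eq_edges[OF Y] by simp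
qed

lemma maxclique_hat_witness:
  assumes Y: "finite Y" "Y \<subseteq> U" and T: "T \<in> maxcliques n Y (restr Rhat Y)"
  obtains W C where "T \<subseteq> W" "W \<subseteq> U" "finite W" "delta n R W \<le> int (n - 1)"
    "C \<subseteq> U" "finite C" "card C = n - 1" "W \<subseteq> gcl n U R C" "T = gcl n U R C \<inter> Y"
proof -
  note T' = maxcliques_finite_card[OF Y(1) T]
  have "n - 1 \<le> card T" using T'(3) by simp
  then obtain C where C: "C \<subseteq> T" "card C = n - 1" "finite C" by (rule obtain_subset_with_card_n)
  have "C \<subseteq> U" using C(1) T'(1) Y(2) by blast
  have TC: "T = gcl n U R C \<inter> Y" by (rule maxclique_hat_eq_gcl_Int[OF Y T C(1,2)])
  then have "T \<subseteq> gcl n U R C" by blast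
  then obtain W where W: "C \<union> T \<subseteq> W" "W \<subseteq> U" "finite W" "delta n R W \<le> int (n - 1)"
    using gcl_finite_subset_witness[OF \<open>C \<subseteq> U\<close> C(3,2) T'(2)] by blast
  have WC: "W \<subseteq> gcl n U R C" using W C(2) by (intro subset_gcl) auto
  show thesis by (rule that[OF _ W(2-4) \<open>C \<subseteq> U\<close> C(3,2) WC TC]) (use W(1) in blast)
qed

lemma delta_hat_ge:
  assumes Y: "finite Y" "Y \<subseteq> U"
  obtains Z where "Y \<subseteq> Z" "Z \<subseteq> U" "finite Z" "delta n R Z \<le> delta n Rhat Y"
proof -
  let ?T = "maxcliques n Y (restr Rhat Y)"
  define witness where "witness T W \<longleftrightarrow>
    T \<subseteq> W \<and> W \<subseteq> U \<and> finite W \<and> delta n R W \<le> int (n - 1) \<and>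
    (\<exists>C. C \<subseteq> U \<and> finite C \<and> card C = n - 1 \<and> W \<subseteq> gcl n U R C \<and> T = gcl n U R C \<inter> Y)"
    for T W
  have "\<forall>T\<in>?T. \<exists>W. witness T W"
  proof
    fix T assume "T \<in> ?T"
    then obtain W C where "T \<subseteq> W" "W \<subseteq> U" "finite W" "delta n R W \<le> int (n - 1)"
      "C \<subseteq> U" "finite C" "card C = n - 1" "W \<subseteq> gcl n U R C" "T = gcl n U R C \<inter> Y"
      by (rule maxclique_hat_witness[OF Y])
    then show "\<exists>W. witness T W" unfolding witness_def by blast
  qed
  from bchoice[OF this] obtain W where W: "\<forall>T\<in>?T. witness T (W T)" ..
  then have W_delta: "finite (W T) \<and> W T \<subseteq> U \<and> delta n R (W T) \<le> int (n - 1)"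
    and W_Int: "W T \<inter> Y = T" if "T \<in> ?T" for T
    using that by (auto simp: witness_def)
  have disj: "edges n R (W T1) \<inter> edges n R (W T2) = {}"
    if T12: "T1 \<in> ?T" "T2 \<in> ?T" "T1 \<noteq> T2" for T1 T2
  proof (rule ccontr)
    assume "edges n R (W T1) \<inter> edges n R (W T2) \<noteq> {}"
    then obtain K where "K \<in> edges n R (W T1)" "K \<in> edges n R (W T2)" by blast
    then have K: "K \<subseteq> W T1" "K \<subseteq> W T2" "n - 1 \<le> card K" by (auto simp: edges_def)
    obtain C1 where C1: "C1 \<subseteq> U" "finite C1" "card C1 = n - 1" "W T1 \<subseteq> gcl n U R C1"
        "T1 = gcl n U R C1 \<inter> Y"
      using W T12(1) by (auto simp: witness_def)
    obtain C2 where C2: "C2 \<subseteq> U" "finite C2" "card C2 = n - 1" "W T2 \<subseteq> gcl n U R C2"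
        "T2 = gcl n U R C2 \<inter> Y"
      using W T12(2) by (auto simp: witness_def)
    have "gcl n U R C1 = gcl n U R C2"
      using K C1(4) C2(4) by (intro gcl_eq_if_common_subset[OF C1(1-3) C2(1-3)]) auto
    with T12(3) C1(5) C2(5) show False by simp
  qed
  have "delta n R (Y \<union> (\<Union>T\<in>?T. W T)) \<le>
        int (card Y) - (\<Sum>T\<in>?T. int (card (W T \<inter> Y)) - int (n - 1))"
    by (rule delta_Un_family_le[OF finite_maxcliques[OF Y(1)] Y W_delta disj])
  also have "\<dots> = delta n Rhat Y"
    using W_Int delta_eq_sum_maxcliques[OF arity_pos Y(1), where R = Rhat] by simp
  finally show thesis
    by (rule that[rotated 3]) (use Y W_delta finite_maxcliques[OF Y(1)] in auto)
qed

lemma dim_hat_eq: "dim n U R X = dim n U Rhat X"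
proof (rule antisym)
  show "dim n U R X \<le> dim n U Rhat X"
    by (rule dim_le_dimI) (metis delta_hat_ge)
  show "dim n U Rhat X \<le> dim n U R X"
    by (rule dim_le_dimI) (use delta_hat_le in blast)
qed

lemma strong_singleton_hat:
  assumes "a \<in> U"
  shows "strong n U Rhat {a}"
proof (rule strongI_delta)
  fix X assume X: "finite X" "X \<subseteq> U"
  then obtain Z where Z: "X \<subseteq> Z" "Z \<subseteq> U" "finite Z" "delta n R Z \<le> delta n Rhat X"
    by (rule delta_hat_ge)
  have "delta n Rhat (X \<inter> {a}) \<le> delta n R (X \<inter> {a})" using X by (intro delta_hat_le) auto
  also have "\<dots> \<le> delta n R Z"
    using Z delta_empty delta_nonneg[OF Z(3,2)] delta_singleton_le[OF Z(3,2)]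
    by (cases "a \<in> X") auto
  also have "\<dots> \<le> delta n Rhat X" by (fact Z(4))
  finally show "delta n Rhat (X \<inter> {a}) \<le> delta n Rhat X" .
qed (use assms in simp)

end

section \<open>Arity zero\<close>

lemma delta_arity0:
  assumes "\<not> R []"
  shows "delta 0 R X = int (card X)"
proof -
  have "maxcliques 0 X (restr R X) = {}"
    using assms by (auto simp: maxcliques_def clique_def restr_def)
  then show ?thesis by (simp add: delta_def)
qed

lemma dim_arity0:
  assumes "\<not> R []" "finite X" "X \<subseteq> U"
  shows "dim 0 U R X = ereal (real (card X))"
proof (rule antisym)
  show "dim 0 U R X \<le> ereal (real (card X))"
    using dim_le_delta[of X X U 0 R] assms by (simp add: delta_arity0)
  have "ereal (real_of_int (int (card X))) \<le> dim 0 U R X"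
    by (rule dim_geI) (simp add: delta_arity0[where R = R, OF assms(1)] card_mono)
  then show "ereal (real (card X)) \<le> dim 0 U R X" by simp
qed

text \<open>For \<open>n = 0\<close> the empty tuple would make \<open>{}\<close> a clique with \<open>starcard 0 {} = 1\<close>,
  so \<open>{}\<close> would have dimension \<open>-1\<close> instead of being independent.\<close>

lemma inCC_arity0_not_nil:
  assumes "inCC 0 {} (restr R {})"
  shows "\<not> R []"
proof
  assume "R []"
  then have "maxcliques 0 {} (restr R {}) = {{}}"
    by (auto simp: maxcliques_def clique_def restr_def)
  then have "delta 0 (restr R {}) {} = -1" by (simp add: delta_def starcard_def restr_restr)
  moreover have "dim 0 {} (restr R {}) {} = 0"
    using assms by (simp add: inCC_def indep_def zero_ereal_def)
  moreover have "dim 0 {} (restr R {}) {} \<le> ereal (real_of_int (delta 0 (restr R {}) {}))"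
    by (rule dim_le_delta) auto
  ultimately show False by simp
qed

lemma geometry_arity0:
  assumes CC: "inCC 0 {} (restr R {})"
    and hat: "maxcliques 0 U Rhat =
      {gcl 0 U R C | C. C \<subseteq> U \<and> finite C \<and> card C = 0 \<and> gcl 0 U R C \<noteq> C}"
  shows "(\<forall>a \<in> U. strong 0 U Rhat {a}) \<and>
         (\<forall>X. finite X \<and> X \<subseteq> U \<longrightarrow> dim 0 U R X = dim 0 U Rhat X)"
proof -
  have R: "\<not> R []" using CC by (rule inCC_arity0_not_nil)
  have "dim 0 U R {a} \<noteq> dim 0 U R {}" if "a \<in> U" for a
    using that dim_arity0[where R = R, OF R, of "{a}" U] dim_arity0[where R = R, OF R, of "{}" U] by simp
  then have "gcl 0 U R {} = {}" by (auto simp: gcl_def)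
  then have no_cliques: "maxcliques 0 U Rhat = {}" using hat by auto
  have Rhat: "\<not> Rhat []"
  proof
    assume "Rhat []"
    then have "clique 0 U Rhat U" by (auto simp: clique_def)
    then obtain M where "M \<in> maxcliques 0 U Rhat" by (rule clique_subset_maxclique)
    with no_cliques show False by simp
  qed
  have "strong 0 U Rhat {a}" if "a \<in> U" for a
    using that by (intro strongI_delta) (auto simp: delta_arity0[where R = Rhat, OF Rhat] card_mono)
  moreover have "dim 0 U R X = dim 0 U Rhat X" if "finite X" "X \<subseteq> U" for X
    using dim_arity0[where R = R, OF R that] dim_arity0[where R = Rhat, OF Rhat that] by simp
  ultimately show ?thesis by blast
qed

theorem mainTheorem7:
  fixes n :: nat and U :: "nat set" and R Rhat :: "nat list \<Rightarrow> bool"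
  assumes gen: "generic_CC n U R"
    and hat_struc: "is_struc n U Rhat"
    and hat_cliques: "maxcliques n U Rhat =
        {gcl n U R C | C. C \<subseteq> U \<and> finite C \<and> card C = n - 1 \<and> gcl n U R C \<noteq> C}"
  shows "(\<forall>a \<in> U. strong n U Rhat {a}) \<and>
         (\<forall>X. finite X \<and> X \<subseteq> U \<longrightarrow> dim n U R X = dim n U Rhat X)"
proof (cases "n = 0")
  case True
  then have "inCC 0 {} (restr R {})"
    and "maxcliques 0 U Rhat =
      {gcl 0 U R C | C. C \<subseteq> U \<and> finite C \<and> card C = 0 \<and> gcl 0 U R C \<noteq> C}"
    using gen hat_cliques by (simp_all add: generic_CC_def)
  from geometry_arity0[OF this] True show ?thesis by simp
next
  case False
  interpret geo_structure n U R Rhat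
    using gen hat_cliques False by unfold_locales (auto simp: generic_CC_def)
  show ?thesis using strong_singleton_hat dim_hat_eq by blast
qed

end
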